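(* Let $a,b,k$ be integers with $4k^2 < a < b-k$. Let $G$ be a graph obtained from the complete bipartite graph $K_{a,b}$ by removing the edges of $k$ forests (each a subgraph of $K_{a,b}$). Then $G$ contains a matching of size $a-k$. *)

theory Defs
  imports Main
begin

text \<open>Simple undirected graphs are given by edge sets: each edge is a 2-element set of vertices.\<close>

definition complete_bipartite :: "'a set \<Rightarrow> 'a set \<Rightarrow> 'a set set" where
  "complete_bipartite A B = {{x, y} | x y. x \<in> A \<and> y \<in> B}"

definition is_cycle :: "'a set set \<Rightarrow> 'a list \<Rightarrow> bool" where
  "is_cycle E vs \<longleftrightarrow> length vs \<ge> 3 \<and> distinct vs \<and>
     (\<forall>i < length vs. {vs ! i, vs ! ((i + 1) mod length vs)} \<in> E)"

definition forest :: "'a set set \<Rightarrow> bool" where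
  "forest E \<longleftrightarrow> \<not> (\<exists>vs. is_cycle E vs)"

definition matching :: "'a set set \<Rightarrow> bool" where
  "matching M \<longleftrightarrow> (\<forall>e \<in> M. \<forall>e' \<in> M. e \<noteq> e' \<longrightarrow> e \<inter> e' = {})"

end

theory Submission
  imports Defs
begin

text \<open>
  Let \<open>N x \<subseteq> B\<close> be the neighbourhood of \<open>x \<in> A\<close> after the forests are removed, and
  \<open>D x = |B| - |N x|\<close> the number of removed edges at \<open>x\<close>. Fix \<open>x\<close> and let \<open>S\<close> be the
  set of vertices of \<open>A\<close> with \<open>D \<ge> D x\<close>. The removed edges between \<open>S\<close> and \<open>B\<close> form
  \<open>k\<close> forests on \<open>|S| + |B|\<close> vertices, so \<open>|S| D x \<le> k (|S| + |B| - 1)\<close>, and with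
  \<open>4k\<^sup>2 < |A| < |B| - k\<close> this forces \<open>|S| + D x \<le> |B| + k\<close>: at most \<open>|N x| + k\<close>
  vertices of \<open>A\<close> have no more neighbours than \<open>x\<close>. Under this condition a greedy
  matching, which matches the vertices in order of increasing \<open>|N x|\<close>, leaves at most
  \<open>k\<close> of them unmatched.
\<close>

definition edges_on :: "'a set \<Rightarrow> 'a set set" where
  "edges_on V = {{x, y} | x y. x \<in> V \<and> y \<in> V \<and> x \<noteq> y}"

definition degree :: "'a set set \<Rightarrow> 'a \<Rightarrow> nat" where
  "degree E v = card {e \<in> E. v \<in> e}"

definition is_path :: "'a set set \<Rightarrow> 'a list \<Rightarrow> bool" where
  "is_path E p \<longleftrightarrow> distinct p \<and> (\<forall>i. Suc i < length p \<longrightarrow> {p ! i, p ! Suc i} \<in> E)"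

lemma finite_edges_on: "finite V \<Longrightarrow> finite (edges_on V)"
  by (rule finite_subset[of _ "Pow V"]) (auto simp: edges_on_def)

lemma forest_subset: "forest E \<Longrightarrow> E' \<subseteq> E \<Longrightarrow> forest E'"
  unfolding forest_def is_cycle_def by blast

lemma is_path_Cons:
  assumes "is_path E (v # p)" "{w, v} \<in> E" "w \<notin> set (v # p)"
  shows "is_path E (w # v # p)"
  using assms unfolding is_path_def by (auto simp: nth_Cons split: nat.split)

lemma is_cycle_close_path:
  assumes "is_path E p" "2 \<le> j" "j < length p" "{p ! j, p ! 0} \<in> E"
  shows "is_cycle E (take (Suc j) p)"
  unfolding is_cycle_def
proof (intro conjI allI impI)
  show "3 \<le> length (take (Suc j) p)" "distinct (take (Suc j) p)"
    using assms(1-3) by (auto simp: is_path_def)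
next
  fix i assume "i < length (take (Suc j) p)"
  then have "i \<le> j" using assms(3) by simp
  then show "{take (Suc j) p ! i, take (Suc j) p ! ((i + 1) mod length (take (Suc j) p))} \<in> E"
    using assms by (cases "i = j") (auto simp: is_path_def)
qed

lemma forest_path_start_neighbour:
  assumes "forest E" "is_path E (v # u # rest)" "{v, w} \<in> E" "w \<noteq> v" "w \<noteq> u"
  shows "w \<notin> set (v # u # rest)"
proof
  let ?p = "v # u # rest"
  assume "w \<in> set ?p"
  then obtain j where j: "j < length ?p" "?p ! j = w" unfolding in_set_conv_nth by blast
  have "j \<noteq> 0" "j \<noteq> 1" using j(2) assms(4,5) by (metis nth_Cons_0, metis One_nat_def nth_Cons_0 nth_Cons_Suc)
  then have "2 \<le> j" by linarith
  moreover have "{?p ! j, ?p ! 0} \<in> E" using j assms(3) by (simp add: insert_commute)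
  ultimately have "is_cycle E (take (Suc j) ?p)"
    using is_cycle_close_path assms(2) j(1) by blast
  then show False using assms(1) by (auto simp: forest_def)
qed

text \<open>The first vertex of a longest path is a leaf.\<close>

lemma forest_has_leaf:
  assumes "finite V" "E \<subseteq> edges_on V" "forest E" "E \<noteq> {}"
  shows "\<exists>v \<in> V. degree E v \<le> 1"
proof -
  let ?P = "\<lambda>p. is_path E p \<and> set p \<subseteq> V"
  obtain x y where xy: "{x, y} \<in> E" "x \<in> V" "y \<in> V" "x \<noteq> y"
    using assms(2,4) unfolding edges_on_def by blast
  then have "?P [x, y]" by (auto simp: is_path_def less_Suc_eq)
  moreover have "\<forall>p. ?P p \<longrightarrow> length p < Suc (card V)"
    using assms(1) by (metis card_mono distinct_card is_path_def less_Suc_eq_le)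
  ultimately obtain p where p: "?P p" and longest: "\<And>q. ?P q \<Longrightarrow> length q \<le> length p"
    using ex_has_greatest_nat[of ?P "[x, y]" length] by blast
  have "2 \<le> length p" using longest[OF \<open>?P [x, y]\<close>] by simp
  then obtain v u rest where p_eq: "p = v # u # rest"
    by (metis One_nat_def Suc_1 Suc_le_length_iff)
  have "{e \<in> E. v \<in> e} \<subseteq> {{v, u}}"
  proof
    fix e assume "e \<in> {e \<in> E. v \<in> e}"
    then obtain w where e: "e = {v, w}" "e \<in> E" "w \<in> V" "w \<noteq> v"
      using assms(2) unfolding edges_on_def by (blast dest: doubleton_eq_iff[THEN iffD1])
    show "e \<in> {{v, u}}"
    proof (rule ccontr)
      assume "e \<notin> {{v, u}}"
      then have "w \<noteq> u" using e(1) by blast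
      then have "w \<notin> set p" unfolding p_eq
        by (intro forest_path_start_neighbour[OF assms(3)]) (use p e in \<open>simp_all add: p_eq\<close>)
      then have "?P (w # p)"
        using p e is_path_Cons[of E v "u # rest" w] by (auto simp: p_eq insert_commute)
      then show False using longest by fastforce
    qed
  qed
  then have "degree E v \<le> card {{v, u}}"
    unfolding degree_def by (intro card_mono) auto
  then show ?thesis using p p_eq by auto
qed

lemma forest_card_less:
  assumes "finite V" "V \<noteq> {}" "E \<subseteq> edges_on V" "forest E"
  shows "card E < card V"
  using assms
proof (induction "card V" arbitrary: V E rule: less_induct)
  case less
  show ?case
  proof (cases "E = {}")
    case True
    then show ?thesis using less.prems(1,2) by (simp add: card_gt_0_iff)
  next
    case False
    then obtain v where v: "v \<in> V" "degree E v \<le> 1"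
      using forest_has_leaf less.prems(1,3,4) by blast
    let ?V' = "V - {v}" and ?E' = "{e \<in> E. v \<notin> e}"
    have "finite E" using finite_subset[OF less.prems(3) finite_edges_on[OF less.prems(1)]] .
    then have "card E = card ?E' + card {e \<in> E. v \<in> e}"
      by (subst card_Un_disjoint[symmetric]) (auto intro: arg_cong[where f = card])
    then have card_E: "card E \<le> card ?E' + 1" using v(2) by (simp add: degree_def)
    have smaller: "card ?V' < card V" using less.prems(1) v(1) by (rule card_Diff1_less)
    moreover have "finite ?V'" using less.prems(1) by simp
    moreover have "?V' \<noteq> {}"
      using False less.prems(3) v(1) unfolding edges_on_def by blast
    moreover have "?E' \<subseteq> edges_on ?V'"
      using less.prems(3) unfolding edges_on_def by blast
    moreover have "forest ?E'" using less.prems(4) by (rule forest_subset) blast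
    ultimately have "card ?E' < card ?V'" by (rule less.hyps)
    then show ?thesis using card_E smaller by linarith
  qed
qed

lemma matching_insert: "matching M \<Longrightarrow> e \<inter> \<Union>M = {} \<Longrightarrow> matching (insert e M)"
  unfolding matching_def by blast

lemma matching_subset: "matching M \<Longrightarrow> M' \<subseteq> M \<Longrightarrow> matching M'"
  unfolding matching_def by blast

lemma card_Union_Int_le:
  assumes "finite M" "\<And>e. e \<in> M \<Longrightarrow> \<exists>z. e \<inter> B \<subseteq> {z}"
  shows "card (\<Union>M \<inter> B) \<le> card M"
proof -
  have "\<Union>M \<inter> B = (\<Union>e\<in>M. e \<inter> B)" by blast
  then have "card (\<Union>M \<inter> B) \<le> (\<Sum>e\<in>M. card (e \<inter> B))"
    using card_UN_le[OF assms(1), of "\<lambda>e. e \<inter> B"] by simp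
  also have "\<dots> \<le> (\<Sum>e\<in>M. 1)"
  proof (rule sum_mono)
    fix e assume "e \<in> M"
    then obtain z where "e \<inter> B \<subseteq> {z}" using assms(2) by blast
    then have "card (e \<inter> B) \<le> card {z}" by (intro card_mono) simp_all
    then show "card (e \<inter> B) \<le> 1" by simp
  qed
  finally show ?thesis by simp
qed

lemma finite_edges_from:
  assumes "finite S" "\<And>x. x \<in> S \<Longrightarrow> finite (N x)"
  shows "finite {{x, y} | x y. x \<in> S \<and> y \<in> N x}"
proof (rule finite_subset)
  show "{{x, y} | x y. x \<in> S \<and> y \<in> N x} \<subseteq> (\<lambda>(x, y). {x, y}) ` Sigma S N" by auto
  show "finite ((\<lambda>(x, y). {x, y}) ` Sigma S N)" using assms by (intro finite_imageI finite_SigmaI)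
qed

lemma matching_extend:
  assumes "finite M" "M \<subseteq> {{x', y} | x' y. x' \<in> S \<and> y \<in> N x'}" "matching M"
    and "N x \<inter> S = {}" "x \<notin> S" "\<And>x'. x' \<in> S \<Longrightarrow> x \<notin> N x'"
    and "card M < card (N x)"
  shows "\<exists>M'. M' \<subseteq> {{x', y} | x' y. x' \<in> insert x S \<and> y \<in> N x'} \<and> matching M'
    \<and> card M' = Suc (card M)"
proof -
  have "card (\<Union>M \<inter> N x) \<le> card M"
  proof (rule card_Union_Int_le[OF assms(1)])
    fix e assume "e \<in> M"
    then obtain x' y' where "e = {x', y'}" "x' \<in> S" using assms(2) by blast
    then have "e \<inter> N x \<subseteq> {y'}" using assms(4) by blast
    then show "\<exists>z. e \<inter> N x \<subseteq> {z}" ..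
  qed
  then have "\<not> N x \<subseteq> \<Union>M" using assms(7) by (auto simp: Int_absorb1)
  then obtain y where y: "y \<in> N x" "y \<notin> \<Union>M" by blast
  have "x \<notin> \<Union>M"
  proof
    assume "x \<in> \<Union>M"
    then obtain x' y' where "x \<in> {x', y'}" "x' \<in> S" "y' \<in> N x'" using assms(2) by blast
    then show False using assms(5,6) by blast
  qed
  then have fresh: "{x, y} \<inter> \<Union>M = {}" using y(2) by blast
  show ?thesis
  proof (intro exI conjI)
    show "insert {x, y} M \<subseteq> {{x', y} | x' y. x' \<in> insert x S \<and> y \<in> N x'}"
      using assms(2) y(1) by blast
    show "matching (insert {x, y} M)" using assms(3) fresh by (rule matching_insert)
    have "{x, y} \<notin> M" using fresh by blast
    then show "card (insert {x, y} M) = Suc (card M)" using assms(1) by simp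
  qed
qed

text \<open>
  The vertex \<open>x\<close> with the most neighbours is matched last: the hypothesis at \<open>x\<close> reads
  \<open>|S| \<le> |N x| + j\<close>, so if the matching of the other vertices is too short to suffice,
  it leaves a neighbour of \<open>x\<close> free.
\<close>

lemma greedy_matching:
  fixes N :: "'a \<Rightarrow> 'a set" and j :: nat
  assumes "finite S" "\<And>x. x \<in> S \<Longrightarrow> finite (N x)" "\<And>x. x \<in> S \<Longrightarrow> N x \<inter> S = {}"
    and "\<And>x. x \<in> S \<Longrightarrow> card {x' \<in> S. card (N x') \<le> card (N x)} \<le> card (N x) + j"
  shows "\<exists>M. M \<subseteq> {{x, y} | x y. x \<in> S \<and> y \<in> N x} \<and> matching M \<and> card S \<le> card M + j"
  using assms
proof (induction S rule: finite_ranking_induct[where f = "\<lambda>x. card (N x)"])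
  case empty
  then show ?case by (intro exI[of _ "{}"]) (auto simp: matching_def)
next
  case (insert x S)
  let ?edges = "\<lambda>T. {{x, y} | x y. x \<in> T \<and> y \<in> N x}"
  show ?case
  proof (cases "x \<in> S")
    case True
    then show ?thesis using insert.IH insert.prems by (simp add: insert_absorb)
  next
    case False
    have "{x' \<in> insert x S. card (N x') \<le> card (N x)} = insert x S" using insert.hyps(2) by auto
    then have card_S: "Suc (card S) \<le> card (N x) + j"
      using insert.prems(3)[of x] insert.hyps(1) False by simp
    have "\<exists>M'. M' \<subseteq> ?edges S \<and> matching M' \<and> card S \<le> card M' + j"
    proof (rule insert.IH)
      fix x' assume "x' \<in> S"
      moreover have "card {x'' \<in> S. card (N x'') \<le> card (N x')}
          \<le> card {x'' \<in> insert x S. card (N x'') \<le> card (N x')}"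
        using insert.hyps(1) by (intro card_mono) auto
      ultimately show "card {x'' \<in> S. card (N x'') \<le> card (N x')} \<le> card (N x') + j"
        using insert.prems(3)[of x'] by simp
    qed (use insert.prems in auto)
    then obtain M' where M': "M' \<subseteq> ?edges S" "matching M'" "card S \<le> card M' + j"
      by blast
    have M'_edges: "M' \<subseteq> ?edges (insert x S)" using M'(1) by blast
    show ?thesis
    proof (cases "Suc (card S) \<le> card M' + j")
      case True
      show ?thesis
      proof (intro exI conjI)
        show "card (insert x S) \<le> card M' + j" using True insert.hyps(1) False by simp
      qed (fact M'_edges M'(2))+
    next
      case short: False
      have "finite M'"
        using finite_subset[OF M'(1) finite_edges_from[of S N]] insert.hyps(1) insert.prems(1) by simp
      moreover have "N x \<inter> S = {}" using insert.prems(2)[of x] by blast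
      moreover have "x \<notin> N x'" if "x' \<in> S" for x' using insert.prems(2)[of x'] that by blast
      moreover have "card M' < card (N x)" using short card_S M'(3) by linarith
      ultimately obtain M where "M \<subseteq> ?edges (insert x S)" "matching M" "card M = Suc (card M')"
        using matching_extend[OF _ M'(1) M'(2) _ False] by blast
      then show ?thesis using M'(3) False insert.hyps(1) by (intro exI[of _ M]) simp
    qed
  qed
qed

lemma card_forest_pairs_less:
  assumes "forest F" "F \<subseteq> complete_bipartite A B" "A \<inter> B = {}"
    and "finite S" "S \<subseteq> A" "S \<noteq> {}" "finite B"
  shows "card {(x, y). x \<in> S \<and> y \<in> B \<and> {x, y} \<in> F} < card S + card B"
proof -
  let ?F_S = "{e \<in> F. e \<inter> S \<noteq> {}}"
  have edges: "?F_S \<subseteq> edges_on (S \<union> B)"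
  proof
    fix e assume e: "e \<in> ?F_S"
    then obtain x y where "e = {x, y}" "x \<in> A" "y \<in> B"
      using assms(2) unfolding complete_bipartite_def by blast
    moreover have "x \<in> S" using e calculation assms(3,5) by blast
    ultimately show "e \<in> edges_on (S \<union> B)" using assms(3) unfolding edges_on_def by blast
  qed
  have fin: "finite (S \<union> B)" using assms(4,7) by simp
  then have "finite ?F_S" using finite_subset[OF edges finite_edges_on] by blast
  have "card {(x, y). x \<in> S \<and> y \<in> B \<and> {x, y} \<in> F} \<le> card ?F_S"
  proof (rule card_inj_on_le)
    show "inj_on (\<lambda>(x, y). {x, y}) {(x, y). x \<in> S \<and> y \<in> B \<and> {x, y} \<in> F}"
      using assms(3,5) by (auto simp: inj_on_def doubleton_eq_iff)
  qed (auto simp: \<open>finite ?F_S\<close>)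
  also have "\<dots> < card (S \<union> B)"
  proof (rule forest_card_less[OF fin _ edges])
    show "S \<union> B \<noteq> {}" using assms(6) by blast
    show "forest ?F_S" using assms(1) by (rule forest_subset) blast
  qed
  also have "\<dots> = card S + card B" using assms(3-5,7) by (subst card_Un_disjoint) auto
  finally show ?thesis .
qed

lemma sum_forests_degree_le:
  assumes "\<forall>i<k. F i \<subseteq> complete_bipartite A B \<and> forest (F i)" "A \<inter> B = {}"
    and "finite S" "S \<subseteq> A" "S \<noteq> {}" "finite B"
  shows "(\<Sum>x\<in>S. card {y \<in> B. \<exists>i<k. {x, y} \<in> F i}) \<le> k * (card S + card B - 1)"
proof -
  let ?P = "\<lambda>i. {(x, y). x \<in> S \<and> y \<in> B \<and> {x, y} \<in> F i}"
  have "(\<Sum>x\<in>S. card {y \<in> B. \<exists>i<k. {x, y} \<in> F i}) = card (SIGMA x:S. {y \<in> B. \<exists>i<k. {x, y} \<in> F i})"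
    using assms(3,6) by simp
  also have "(SIGMA x:S. {y \<in> B. \<exists>i<k. {x, y} \<in> F i}) = (\<Union>i<k. ?P i)" by blast
  also have "card (\<Union>i<k. ?P i) \<le> (\<Sum>i<k. card (?P i))" by (rule card_UN_le) simp
  also have "\<dots> \<le> (\<Sum>i<k. card S + card B - 1)"
  proof (rule sum_mono)
    fix i assume "i \<in> {..<k}"
    then have "card (?P i) < card S + card B"
      using assms(1) by (intro card_forest_pairs_less[OF _ _ assms(2-6)]) auto
    then show "card (?P i) \<le> card S + card B - 1" by linarith
  qed
  finally show ?thesis by simp
qed

text \<open>
  Writing \<open>s = k + 1 + u\<close> and \<open>b = s + k + 1 + v\<close>, a counterexample would satisfy
  \<open>k\<^sup>2 \<ge> 2k + 2 + 2u + v + uv\<close>, contradicting \<open>k\<^sup>2 < b = 2k + 2 + u + v\<close>.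
\<close>

lemma sum_le_of_product_le:
  fixes s t k b :: nat
  assumes "s + k < b" "k ^ 2 < b" "t \<le> b" "s * t \<le> k * (s + b - 1)"
  shows "s + t \<le> b + k"
proof (rule ccontr)
  assume "\<not> s + t \<le> b + k"
  then have t: "b + k + 1 \<le> s + t" by simp
  then have "k + 1 \<le> s" using assms(3) by linarith
  then obtain u where u: "s = k + 1 + u" by (auto dest: le_Suc_ex)
  have "s + k + 1 \<le> b" using assms(1) by linarith
  then obtain v where v: "b = s + k + 1 + v" by (auto dest: le_Suc_ex)
  have "2 * k + 2 + v \<le> t" using t u v by linarith
  then have "s * (2 * k + 2 + v) \<le> s * t" by (rule mult_le_mono2)
  also have "\<dots> \<le> k * (s + b - 1)" by (fact assms(4))
  finally have "(k + 1 + u) * (2 * k + 2 + v) \<le> k * (3 * k + 2 + 2 * u + v)"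
    using u v by (simp add: algebra_simps)
  moreover have "k * k < 2 * k + 2 + u + v" using assms(2) u v by (simp add: power2_eq_square)
  ultimately show False by (simp add: algebra_simps)
qed

lemma card_poorer_vertices_le:
  assumes "finite A" "finite B" "A \<inter> B = {}" "4 * k ^ 2 < card A" "card A + k < card B"
    and "\<forall>i<k. F i \<subseteq> complete_bipartite A B \<and> forest (F i)" "x \<in> A"
  defines "N \<equiv> \<lambda>x. {y \<in> B. \<forall>i<k. {x, y} \<notin> F i}"
  shows "card {x' \<in> A. card (N x') \<le> card (N x)} \<le> card (N x) + k"
proof -
  define D where "D x = card {y \<in> B. \<exists>i<k. {x, y} \<in> F i}" for x
  have D_le: "D x \<le> card B" for x unfolding D_def using assms(2) by (intro card_mono) auto
  have card_N: "card (N x) = card B - D x" for x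
  proof -
    have "N x = B - {y \<in> B. \<exists>i<k. {x, y} \<in> F i}" unfolding N_def by blast
    then show ?thesis unfolding D_def using assms(2) by (simp add: card_Diff_subset)
  qed
  define S where "S = {x' \<in> A. D x \<le> D x'}"
  have S: "S \<subseteq> A" "x \<in> S" "finite S" using assms(1,7) by (auto simp: S_def)
  have "card S * D x \<le> (\<Sum>x'\<in>S. D x')"
    using sum_bounded_below[of S "D x" D] by (simp add: S_def)
  also have "\<dots> \<le> k * (card S + card B - 1)"
    unfolding D_def using assms(2,3,6) S by (intro sum_forests_degree_le) auto
  finally have "card S + D x \<le> card B + k"
  proof (rule sum_le_of_product_le[rotated 3])
    have "card S \<le> card A" using S assms(1) by (intro card_mono)
    then show "card S + k < card B" using assms(5) by linarith
    show "k ^ 2 < card B" using assms(4,5) by linarith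
  qed (fact D_le)
  moreover have "{x' \<in> A. card (N x') \<le> card (N x)} = S"
    using D_le by (auto simp: card_N S_def le_diff_iff')
  ultimately show ?thesis using card_N D_le by simp
qed

theorem claim10:
  fixes A B :: "'a set" and k :: nat and F :: "nat \<Rightarrow> 'a set set"
  assumes "finite A" and "finite B" and "A \<inter> B = {}"
    and "4 * k ^ 2 < card A" and "card A + k < card B"
    and "\<forall>i < k. F i \<subseteq> complete_bipartite A B \<and> forest (F i)"
  shows "\<exists>M. M \<subseteq> complete_bipartite A B - (\<Union>i<k. F i) \<and> matching M \<and> card M = card A - k"
proof -
  define N where "N x = {y \<in> B. \<forall>i<k. {x, y} \<notin> F i}" for x
  have "\<exists>M. M \<subseteq> {{x, y} | x y. x \<in> A \<and> y \<in> N x} \<and> matching M \<and> card A \<le> card M + k"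
  proof (rule greedy_matching)
    show "card {x' \<in> A. card (N x') \<le> card (N x)} \<le> card (N x) + k" if "x \<in> A" for x
      using card_poorer_vertices_le[OF assms that] unfolding N_def .
  qed (use assms(1-3) in \<open>auto simp: N_def\<close>)
  then obtain M where M: "M \<subseteq> {{x, y} | x y. x \<in> A \<and> y \<in> N x}" "matching M" "card A - k \<le> card M"
    by auto
  then obtain M' where M': "M' \<subseteq> M" "card M' = card A - k" by (meson obtain_subset_with_card_n)
  show ?thesis
  proof (intro exI conjI)
    show "M' \<subseteq> complete_bipartite A B - (\<Union>i<k. F i)"
      using M(1) M'(1) unfolding N_def complete_bipartite_def by blast
    show "matching M'" using M(2) M'(1) by (rule matching_subset)
  qed (fact M'(2))
qed

end
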